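(* Let $(\alpha,\beta)\in\Delta_K$ and $n\in\mathbb{Z}_{\ge0}$. Let $M_n=A_{\varepsilon_0}\cdots A_{\varepsilon_{n-1}}S=\begin{pmatrix}p''_n&p'_n&p_n\\ q''_n&q'_n&q_n\\ r''_n&r'_n&r_n\end{pmatrix}$, where $\varepsilon_k=\varepsilon(T^k(\alpha,\beta))$ (and $M_0=S$), and let $\delta_n(\alpha,\beta)$ be the set of interior points of the triangle in $\mathbb{R}^2$ with vertices $(q_n/p_n,r_n/p_n)$, $(q'_n/p'_n,r'_n/p'_n)$, $(q''_n/p''_n,r''_n/p''_n)$. Then $(\alpha,\beta)\in\delta_n(\alpha,\beta)$.
   Context: Let $K\subset\mathbb{R}$ be a real cubic number field, $N=N_{K/\mathbb{Q}}$ its norm. Fix $r=p/q$ with $p,q$ positive coprime integers and $3\nmid p$. Let $\Delta_K=\{(\alpha,\beta)\in K^2:\ 1,\alpha,\beta \text{ linearly independent over }\mathbb{Q},\ \alpha,\beta>0,\ \alpha+\beta<1\}$ and $Ind=\{(i,j): i,j\in\{0,1,2\},\ i\neq j\}$. Let $\Delta=\{(x,y)\in\mathbb{R}^2: x,y\ge 0,\ x+y\le 1\}$ and $\triangle(1,2)=\{(x,y)\in\Delta: x\ge y\}$, $\triangle(2,1)=\{x\le y\}$, $\triangle(0,1)=\{2x+y-1\le 0\}$, $\triangle(1,0)=\{2x+y-1\ge 0\}$, $\triangle(0,2)=\{x+2y-1\le0\}$, $\triangle(2,0)=\{x+2y-1\ge 0\}$ (all subsets of $\Delta$). Maps $T_{(i,j)}:\triangle(i,j)\to\Delta$: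 $T_{(1,2)}(x,y)=(\frac{x-y}{1-y},\frac{y}{1-y})$, $T_{(2,1)}(x,y)=(\frac{x}{1-x},\frac{y-x}{1-x})$, $T_{(0,1)}(x,y)=(\frac{x}{1-x},\frac{y}{1-x})$, $T_{(1,0)}(x,y)=(\frac{2x+y-1}{x+y},\frac{y}{x+y})$, $T_{(0,2)}(x,y)=(\frac{x}{1-y},\frac{y}{1-y})$, $T_{(2,0)}(x,y)=(\frac{x}{x+y},\frac{x+2y-1}{x+y})$. For $(\alpha,\beta)\in\Delta_K$ put $\gamma=1-\alpha-\beta$ and $v_{\{1,2\}}=\frac{\alpha^r\beta^r}{|N(\alpha)N(\beta)|}$, $v_{\{0,1\}}=\frac{\alpha^r\gamma^r}{|N(\alpha)N(\gamma)|}$, $v_{\{0,2\}}=\frac{\beta^r\gamma^r}{|N(\beta)N(\gamma)|}$; the maximum is attained at a unique pair $\{i_0,j_0\}$. $\varepsilon(\alpha,\beta)$ is the ordered pair $(i,j)\in Ind$ with $\{i,j\}=\{i_0,j_0\}$ and $(\alpha,\beta)\in\triangle(i,j)$, and $T(\alpha,\beta)=T_{\varepsilon(\alpha,\beta)}(\alpha,\beta)$ (a map $\Delta_K\to\Delta_K$). Matrices: $A_{(1,2)}=\begin{pmatrix}1&0&1\\0&1&1\\0&0&1\end{pmatrix}$, $A_{(2,1)}=\begin{pmatrix}1&1&0\\0&1&0\\0&1&1\end{pmatrix}$, $A_{(0,1)}=\begin{pmatrix}1&1&0\\0&1&0\\0&0&1\end{pmatrix}$, $A_{(1,0)}=\begin{pmatrix}2&-1&-1\\1&0&-1\\0&0&1\end{pmatrix}$,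 $A_{(0,2)}=\begin{pmatrix}1&0&1\\0&1&0\\0&0&1\end{pmatrix}$, $A_{(2,0)}=\begin{pmatrix}2&-1&-1\\0&1&0\\1&-1&0\end{pmatrix}$, $S=\begin{pmatrix}1&1&1\\0&1&0\\0&0&1\end{pmatrix}$. *)

theory Defs
  imports "HOL-Analysis.Analysis"
begin

text \<open>Every real cubic field K
is Q(theta) for such a theta (primitive element theorem), and conversely.\<close>
definition cubic_gen :: "real \<Rightarrow> bool" where
  "cubic_gen \<theta> \<longleftrightarrow>
     (\<exists>a b c :: rat. \<theta>^3 + of_rat a * \<theta>^2 + of_rat b * \<theta> + of_rat c = 0) \<and>
     (\<forall>a b c :: rat. of_rat a + of_rat b * \<theta> + of_rat c * \<theta>^2 = 0 \<longrightarrow> a = 0 \<and> b = 0 \<and> c = 0)"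

definition cfield :: "real \<Rightarrow> real set" where
  "cfield \<theta> = {of_rat a + of_rat b * \<theta> + of_rat c * \<theta>^2 | a b c :: rat. True}"

definition coords :: "real \<Rightarrow> real \<Rightarrow> rat \<times> rat \<times> rat" where
  "coords \<theta> x = (THE (a, b, c). x = of_rat a + of_rat b * \<theta> + of_rat c * \<theta>^2)"

text \<open>Field norm N_{K/Q}(x): determinant of the Q-linear map y |-> x*y of K,
 in the basis 1, theta, theta^2 (columns: coordinates of x, x*theta, x*theta^2).\<close>
definition fnorm :: "real \<Rightarrow> real \<Rightarrow> rat" where
  "fnorm \<theta> x =
    (case coords \<theta> x of (a1, a2, a3) \<Rightarrow>
     case coords \<theta> (x * \<theta>) of (b1, b2, b3) \<Rightarrow>
     case coords \<theta> (x * \<theta>^2) of (c1, c2, c3) \<Rightarrow>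
       a1 * (b2 * c3 - b3 * c2) - b1 * (a2 * c3 - a3 * c2) + c1 * (a2 * b3 - a3 * b2))"

definition DeltaK :: "real \<Rightarrow> (real \<times> real) set" where
  "DeltaK \<theta> = {(\<alpha>, \<beta>). \<alpha> \<in> cfield \<theta> \<and> \<beta> \<in> cfield \<theta> \<and>
      (\<forall>a b c :: rat. of_rat a + of_rat b * \<alpha> + of_rat c * \<beta> = 0 \<longrightarrow> a = 0 \<and> b = 0 \<and> c = 0) \<and>
      \<alpha> > 0 \<and> \<beta> > 0 \<and> \<alpha> + \<beta> < 1}"

definition vval :: "real \<Rightarrow> real \<Rightarrow> real \<Rightarrow> real \<Rightarrow> real" where
  "vval \<theta> r s t = (s powr r * t powr r) / \<bar>real_of_rat (fnorm \<theta> s) * real_of_rat (fnorm \<theta> t)\<bar>"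

definition tri :: "nat \<times> nat \<Rightarrow> (real \<times> real) set" where
  "tri e = {(x, y). x \<ge> 0 \<and> y \<ge> 0 \<and> x + y \<le> 1 \<and>
     (if e = (1,2) then x \<ge> y
      else if e = (2,1) then x \<le> y
      else if e = (0,1) then 2*x + y - 1 \<le> 0
      else if e = (1,0) then 2*x + y - 1 \<ge> 0
      else if e = (0,2) then x + 2*y - 1 \<le> 0
      else if e = (2,0) then x + 2*y - 1 \<ge> 0
      else False)}"

text \<open>epsilon(alpha,beta): the ordered pair (i,j) in Ind with {i,j} the (unique) pair maximizing
 v, and (alpha,beta) in triangle(i,j).  (Uniqueness of the maximizing pair and of the
 orientation holds on Delta_K; the tie-breaking below is therefore immaterial there.)\<close>
definition eps :: "real \<Rightarrow> real \<Rightarrow> real \<times> real \<Rightarrow> nat \<times> nat" where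
  "eps \<theta> r p = (case p of (x, y) \<Rightarrow>
     let g = 1 - x - y;
         v12 = vval \<theta> r x y; v01 = vval \<theta> r x g; v02 = vval \<theta> r y g
     in if v12 \<ge> v01 \<and> v12 \<ge> v02 then (if (x, y) \<in> tri (1,2) then (1,2) else (2,1))
        else if v01 \<ge> v02 then (if (x, y) \<in> tri (0,1) then (0,1) else (1,0))
        else (if (x, y) \<in> tri (0,2) then (0,2) else (2,0)))"

definition Tmap :: "nat \<times> nat \<Rightarrow> real \<times> real \<Rightarrow> real \<times> real" where
  "Tmap e p = (case p of (x, y) \<Rightarrow>
      if e = (1,2) then ((x - y) / (1 - y), y / (1 - y))
      else if e = (2,1) then (x / (1 - x), (y - x) / (1 - x))
      else if e = (0,1) then (x / (1 - x), y / (1 - x))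
      else if e = (1,0) then ((2*x + y - 1) / (x + y), y / (x + y))
      else if e = (0,2) then (x / (1 - y), y / (1 - y))
      else ((x / (x + y), (x + 2*y - 1) / (x + y))))"

definition T :: "real \<Rightarrow> real \<Rightarrow> real \<times> real \<Rightarrow> real \<times> real" where
  "T \<theta> r p = Tmap (eps \<theta> r p) p"

type_synonym mat3 = "nat \<Rightarrow> nat \<Rightarrow> real"

definition mat3 :: "real list list \<Rightarrow> mat3" where
  "mat3 L = (\<lambda>i j. L ! i ! j)"

definition mmul :: "mat3 \<Rightarrow> mat3 \<Rightarrow> mat3" where
  "mmul A B = (\<lambda>i j. \<Sum>k<3. A i k * B k j)"

definition mid :: mat3 where
  "mid = (\<lambda>i j. if i = j then 1 else 0)"

definition Amat :: "nat \<times> nat \<Rightarrow> mat3" where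
  "Amat e =
     (if e = (1,2) then mat3 [[1,0,1],[0,1,1],[0,0,1]]
      else if e = (2,1) then mat3 [[1,1,0],[0,1,0],[0,1,1]]
      else if e = (0,1) then mat3 [[1,1,0],[0,1,0],[0,0,1]]
      else if e = (1,0) then mat3 [[2,-1,-1],[1,0,-1],[0,0,1]]
      else if e = (0,2) then mat3 [[1,0,1],[0,1,0],[0,0,1]]
      else mat3 [[2,-1,-1],[0,1,0],[1,-1,0]])"

definition Smat :: mat3 where
  "Smat = mat3 [[1,1,1],[0,1,0],[0,0,1]]"

fun Aprod :: "real \<Rightarrow> real \<Rightarrow> nat \<Rightarrow> real \<times> real \<Rightarrow> mat3" where
  "Aprod \<theta> r 0 p = mid"
| "Aprod \<theta> r (Suc n) p = mmul (Amat (eps \<theta> r p)) (Aprod \<theta> r n (T \<theta> r p))"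

definition Mn :: "real \<Rightarrow> real \<Rightarrow> nat \<Rightarrow> real \<times> real \<Rightarrow> mat3" where
  "Mn \<theta> r n p = mmul (Aprod \<theta> r n p) Smat"

definition vert :: "mat3 \<Rightarrow> nat \<Rightarrow> real \<times> real" where
  "vert M j = (M 1 j / M 0 j, M 2 j / M 0 j)"

definition delta_n :: "real \<Rightarrow> real \<Rightarrow> nat \<Rightarrow> real \<times> real \<Rightarrow> (real \<times> real) set" where
  "delta_n \<theta> r n p = (let M = Mn \<theta> r n p in interior (convex hull {vert M 2, vert M 1, vert M 0}))"

end

theory Submission
  imports Defs
begin

text \<open>For \<open>(x, y)\<close> in the triangle \<open>\<triangle>(e)\<close>, the homogeneous vector \<open>(1, x, y)\<close> is a positive
multiple of \<open>A\<^sub>e (1, T\<^sub>e(x, y))\<close>. Iterating, \<open>(1, \<alpha>, \<beta>) = M\<^sub>n w\<close> with \<open>w\<close> a positive multiple of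
\<open>(1 - x - y, x, y)\<close> for \<open>(x, y) = T\<^sup>n(\<alpha>, \<beta>)\<close>, so \<open>(\<alpha>, \<beta>)\<close> is the convex combination of the
vertices of \<open>\<delta>\<^sub>n\<close> with weights \<open>M\<^sub>n[0, j] w\<^sub>j\<close>. These weights are strictly positive because
the orbit never meets a line with rational coefficients: the \<open>A\<^sub>e\<close> are unimodular, so the
\<open>\<rat>\<close>-linear independence of \<open>1, x, y\<close> is preserved by \<open>T\<close>.\<close>

definition mvec :: "mat3 \<Rightarrow> real \<times> real \<times> real \<Rightarrow> real \<times> real \<times> real" where
  "mvec M x = (case x of (a, b, c) \<Rightarrow>
     (M 0 0 * a + M 0 1 * b + M 0 2 * c,
      M 1 0 * a + M 1 1 * b + M 1 2 * c,
      M 2 0 * a + M 2 1 * b + M 2 2 * c))"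

definition det3 :: "mat3 \<Rightarrow> real" where
  "det3 M = M 0 0 * (M 1 1 * M 2 2 - M 1 2 * M 2 1) - M 0 1 * (M 1 0 * M 2 2 - M 1 2 * M 2 0)
     + M 0 2 * (M 1 0 * M 2 1 - M 1 1 * M 2 0)"

definition transpose3 :: "mat3 \<Rightarrow> mat3" where
  "transpose3 M = (\<lambda>i j. M j i)"

text \<open>The entry \<open>(i, j)\<close> is the \<open>(j, i)\<close> cofactor; cyclic indices make the signs automatic.\<close>
definition adj3 :: "mat3 \<Rightarrow> mat3" where
  "adj3 M = (\<lambda>i j. M ((j + 1) mod 3) ((i + 1) mod 3) * M ((j + 2) mod 3) ((i + 2) mod 3)
                 - M ((j + 1) mod 3) ((i + 2) mod 3) * M ((j + 2) mod 3) ((i + 1) mod 3))"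

lemma sum_lessThan_3: "(\<Sum>k<(3::nat). f k) = f 0 + f 1 + (f 2 :: real)"
  by (simp add: eval_nat_numeral)

lemma mvec_mmul: "mvec (mmul A B) x = mvec A (mvec B x)"
  by (cases x) (simp add: mvec_def mmul_def sum_lessThan_3 algebra_simps)

lemma mvec_scaleR: "mvec M (c *\<^sub>R x) = c *\<^sub>R mvec M x"
  by (cases x) (simp add: mvec_def algebra_simps)

lemma mvec_mid: "mvec mid x = x"
  by (cases x) (simp add: mvec_def mid_def)

lemma det3_mmul: "det3 (mmul A B) = det3 A * det3 B"
  unfolding det3_def mmul_def sum_lessThan_3 by (simp add: algebra_simps)

lemma mvec_adj3_mvec: "mvec (adj3 M) (mvec M x) = det3 M *\<^sub>R x"
  by (cases x) (simp add: mvec_def adj3_def det3_def numeral_2_eq_2 algebra_simps)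

lemma mvec_mvec_adj3: "mvec M (mvec (adj3 M) x) = det3 M *\<^sub>R x"
  by (cases x) (simp add: mvec_def adj3_def det3_def numeral_2_eq_2 algebra_simps)

lemma inner_mvec_transpose3: "inner (mvec (transpose3 M) w) x = inner w (mvec M x)"
  by (cases w; cases x) (simp add: mvec_def transpose3_def algebra_simps)

definition rat_indep :: "real \<times> real \<times> real \<Rightarrow> bool" where
  "rat_indep u \<longleftrightarrow> (\<forall>w \<in> \<rat> \<times> \<rat> \<times> \<rat>. inner w u = 0 \<longrightarrow> w = 0)"

lemma rat_indep_scaleR_imp: "rat_indep (c *\<^sub>R u) \<Longrightarrow> rat_indep u"
  by (simp add: rat_indep_def)

lemma rat_indep_mvec_imp:
  assumes indep: "rat_indep (mvec M u)"
    and rat: "\<And>i j. i < 3 \<Longrightarrow> j < 3 \<Longrightarrow> M i j \<in> \<rat>" and det: "det3 M \<noteq> 0"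
  shows "rat_indep u"
  unfolding rat_indep_def
proof (intro ballI impI)
  fix w assume w: "w \<in> \<rat> \<times> \<rat> \<times> \<rat>" and wu: "inner w u = 0"
  define v where "v = mvec (transpose3 (adj3 M)) w"
  have v_inner: "inner v (mvec M x) = det3 M * inner w x" for x
    by (simp add: v_def inner_mvec_transpose3 mvec_adj3_mvec)
  have "v \<in> \<rat> \<times> \<rat> \<times> \<rat>"
    using w rat[of 0 0] rat[of 0 1] rat[of 0 2] rat[of 1 0] rat[of 1 1] rat[of 1 2]
      rat[of 2 0] rat[of 2 1] rat[of 2 2]
    by (cases w) (auto simp: v_def mvec_def transpose3_def adj3_def numeral_2_eq_2)
  with indep have "inner v (mvec M u) = 0 \<longrightarrow> v = 0"
    unfolding rat_indep_def by blast
  with v_inner[of u] wu have "v = 0" by simp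
  with v_inner[of w] det show "w = 0" by simp
qed

lemma Amat_Rats: "i < 3 \<Longrightarrow> j < 3 \<Longrightarrow> Amat e i j \<in> \<rat>"
  by (auto simp: Amat_def mat3_def less_Suc_eq numeral_3_eq_3)

lemma det3_Amat: "det3 (Amat e) = 1"
  by (simp add: Amat_def det3_def mat3_def)

definition homog :: "real \<times> real \<Rightarrow> real \<times> real \<times> real" where
  "homog p = (1, fst p, snd p)"

definition Delta :: "(real \<times> real) set" where
  "Delta = {(x, y). 0 \<le> x \<and> 0 \<le> y \<and> x + y \<le> 1}"

lemma rat_indep_Delta_imp_interior:
  assumes "rat_indep (homog (x, y))" "(x, y) \<in> Delta"
  shows "0 < x" "0 < y" "x + y < 1"
proof -
  have "inner w (homog (x, y)) \<noteq> 0" if "w \<in> \<rat> \<times> \<rat> \<times> \<rat>" "w \<noteq> 0" for w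
    using assms(1) that by (auto simp: rat_indep_def)
  from this[of "(0, 1, 0)"] this[of "(0, 0, 1)"] this[of "(-1, 1, 1)"] assms(2)
  show "0 < x" "0 < y" "x + y < 1" by (auto simp: homog_def Delta_def zero_prod_def)
qed

lemma Tmap_homog:
  assumes "(x, y) \<in> tri e" "0 < x" "0 < y" "x + y < 1"
  shows "Tmap e (x, y) \<in> Delta"
    and "\<exists>d>0. homog (x, y) = d *\<^sub>R mvec (Amat e) (homog (Tmap e (x, y)))"
proof -
  have "e \<in> {(1,2), (2,1), (0,1), (1,0), (0,2), (2,0)}"
    using assms(1) by (auto simp: tri_def split: if_splits)
  then show "Tmap e (x, y) \<in> Delta"
    using assms by (auto simp: tri_def Tmap_def Delta_def divide_simps)
  \<comment> \<open>the denominator of \<open>Tmap e\<close>\<close>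
  define d where "d = (if e \<in> {(1,2), (0,2)} then 1 - y else if e \<in> {(2,1), (0,1)} then 1 - x else x + y)"
  have "d > 0" using assms by (auto simp: d_def)
  moreover have "homog (x, y) = d *\<^sub>R mvec (Amat e) (homog (Tmap e (x, y)))"
    using \<open>e \<in> _\<close> assms
    by (auto simp: d_def Tmap_def Amat_def mat3_def homog_def mvec_def divide_simps)
  ultimately show "\<exists>d>0. homog (x, y) = d *\<^sub>R mvec (Amat e) (homog (Tmap e (x, y)))" by blast
qed

lemma eps_in_tri: "(x, y) \<in> Delta \<Longrightarrow> (x, y) \<in> tri (eps \<theta> r (x, y))"
  unfolding eps_def Let_def by (auto simp: tri_def Delta_def)

lemma T_step:
  assumes "p \<in> Delta" "rat_indep (homog p)"
  shows "T \<theta> r p \<in> Delta" "rat_indep (homog (T \<theta> r p))"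
    and "\<exists>d>0. homog p = d *\<^sub>R mvec (Amat (eps \<theta> r p)) (homog (T \<theta> r p))"
proof -
  obtain x y where p: "p = (x, y)" by fastforce
  have xy: "0 < x" "0 < y" "x + y < 1"
    using rat_indep_Delta_imp_interior assms unfolding p by blast+
  note step = Tmap_homog[OF eps_in_tri xy, folded T_def p]
  show "T \<theta> r p \<in> Delta" using assms(1) step(1) by (simp add: p)
  show "\<exists>d>0. homog p = d *\<^sub>R mvec (Amat (eps \<theta> r p)) (homog (T \<theta> r p))"
    using assms(1) step(2) by (simp add: p)
  then obtain d where "homog p = d *\<^sub>R mvec (Amat (eps \<theta> r p)) (homog (T \<theta> r p))" by blast
  with assms(2) have "rat_indep (mvec (Amat (eps \<theta> r p)) (homog (T \<theta> r p)))"
    using rat_indep_scaleR_imp by metis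
  then show "rat_indep (homog (T \<theta> r p))"
    by (rule rat_indep_mvec_imp) (simp_all add: Amat_Rats det3_Amat)
qed

lemma mvec_Mn_Suc:
  "mvec (Mn \<theta> r (Suc n) p) w = mvec (Amat (eps \<theta> r p)) (mvec (Mn \<theta> r n (T \<theta> r p)) w)"
  by (simp add: Mn_def mvec_mmul)

lemma homog_in_image_Mn:
  assumes "p \<in> Delta" "rat_indep (homog p)"
  shows "\<exists>w \<in> {0<..} \<times> {0<..} \<times> {0<..}. mvec (Mn \<theta> r n p) w = homog p"
  using assms
proof (induction n arbitrary: p)
  case 0
  obtain x y where p: "p = (x, y)" by fastforce
  have "0 < x" "0 < y" "x + y < 1"
    using rat_indep_Delta_imp_interior 0 unfolding p by blast+
  moreover have "mvec (Mn \<theta> r 0 p) (1 - x - y, x, y) = homog p"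
    unfolding Mn_def Aprod.simps mvec_mmul mvec_mid
    by (simp add: p mvec_def Smat_def mat3_def homog_def)
  ultimately show ?case by force
next
  case (Suc n)
  obtain d where d: "d > 0" "homog p = d *\<^sub>R mvec (Amat (eps \<theta> r p)) (homog (T \<theta> r p))"
    using T_step(3)[OF Suc.prems] by blast
  obtain w where w: "w \<in> {0<..} \<times> {0<..} \<times> {0<..}" "mvec (Mn \<theta> r n (T \<theta> r p)) w = homog (T \<theta> r p)"
    using Suc.IH T_step(1,2)[OF Suc.prems] by blast
  have "mvec (Mn \<theta> r (Suc n) p) (d *\<^sub>R w) = homog p"
    by (simp add: mvec_Mn_Suc mvec_scaleR w(2) d(2))
  moreover have "d *\<^sub>R w \<in> {0<..} \<times> {0<..} \<times> {0<..}"
    using w(1) d(1) by (auto simp: mem_Times_iff)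
  ultimately show ?case by (rule bexI)
qed

definition Delta_cone :: "(real \<times> real \<times> real) set" where
  "Delta_cone = {(a, b, c). 0 < a \<and> 0 \<le> b \<and> 0 \<le> c \<and> b + c \<le> a}"

lemma mvec_Amat_Delta_cone: "u \<in> Delta_cone \<Longrightarrow> mvec (Amat e) u \<in> Delta_cone"
  by (cases u) (auto simp: Amat_def Delta_cone_def mvec_def mat3_def)

lemma mvec_Aprod_Delta_cone: "u \<in> Delta_cone \<Longrightarrow> mvec (Aprod \<theta> r n p) u \<in> Delta_cone"
proof (induction n arbitrary: p u)
  case 0 then show ?case by (simp add: mvec_mid)
next
  case (Suc n) then show ?case by (simp add: mvec_mmul mvec_Amat_Delta_cone)
qed

lemma Mn_first_row_pos:
  assumes "j < 3" shows "0 < Mn \<theta> r n p 0 j"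
proof -
  have "(Smat 0 j, Smat 1 j, Smat 2 j) \<in> Delta_cone"
    using assms by (auto simp: Smat_def mat3_def Delta_cone_def less_Suc_eq numeral_3_eq_3)
  then have "mvec (Aprod \<theta> r n p) (Smat 0 j, Smat 1 j, Smat 2 j) \<in> Delta_cone"
    by (rule mvec_Aprod_Delta_cone)
  moreover have "Mn \<theta> r n p 0 j = fst (mvec (Aprod \<theta> r n p) (Smat 0 j, Smat 1 j, Smat 2 j))"
    by (simp add: Mn_def mmul_def mvec_def sum_lessThan_3)
  ultimately show ?thesis by (auto simp: Delta_cone_def)
qed

lemma det3_Mn: "det3 (Mn \<theta> r n p) = 1"
proof -
  have "det3 (Aprod \<theta> r n p) = 1"
  proof (induction n arbitrary: p)
    case 0 show ?case by (simp add: det3_def mid_def)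
  next
    case (Suc n) then show ?case by (simp add: det3_mmul det3_Amat)
  qed
  then show ?thesis unfolding Mn_def det3_mmul by (simp add: det3_def Smat_def mat3_def)
qed

lemma in_convex_hull_vert:
  assumes M0: "\<And>j. j < 3 \<Longrightarrow> 0 < M 0 j"
    and w: "w \<in> {0..} \<times> {0..} \<times> {0..}" and Mw: "mvec M w = homog z"
  shows "z \<in> convex hull {vert M 2, vert M 1, vert M 0}"
proof -
  obtain w0 w1 w2 where w_eq: "w = (w0, w1, w2)" by (cases w)
  have pos: "0 < M 0 0" "0 < M 0 1" "0 < M 0 2" using M0 by simp_all
  have sum: "M 0 2 * w2 + M 0 1 * w1 + M 0 0 * w0 = 1"
    and z: "z = (M 0 2 * w2) *\<^sub>R vert M 2 + (M 0 1 * w1) *\<^sub>R vert M 1 + (M 0 0 * w0) *\<^sub>R vert M 0"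
    using Mw pos by (auto simp: w_eq mvec_def homog_def vert_def prod_eq_iff algebra_simps)
  show ?thesis
    unfolding convex_hull_3 using w pos sum z
    by (intro CollectI exI[of _ "M 0 2 * w2"] exI[of _ "M 0 1 * w1"] exI[of _ "M 0 0 * w0"])
      (auto simp: w_eq)
qed

lemma in_interior_convex_hull_vert:
  assumes det: "det3 M \<noteq> 0" and M0: "\<And>j. j < 3 \<Longrightarrow> 0 < M 0 j"
    and w: "w \<in> {0<..} \<times> {0<..} \<times> {0<..}" and Mw: "mvec M w = homog z"
  shows "z \<in> interior (convex hull {vert M 2, vert M 1, vert M 0})"
proof (rule interiorI)
  define f where "f z = (1 / det3 M) *\<^sub>R mvec (adj3 M) (homog z)" for z
  have M_f: "mvec M (f z) = homog z" for z
    using det by (simp add: f_def mvec_scaleR mvec_mvec_adj3)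
  have "continuous (at z) f" for z
    unfolding f_def mvec_def homog_def case_prod_beta by (intro continuous_intros)
  then show "open (f -` ({0<..} \<times> {0<..} \<times> {0<..}))"
    by (intro continuous_open_vimage open_Times open_greaterThan)
  have "f z = w"
    using det by (simp add: f_def Mw[symmetric] mvec_adj3_mvec)
  with w show "z \<in> f -` ({0<..} \<times> {0<..} \<times> {0<..})" by simp
  show "f -` ({0<..} \<times> {0<..} \<times> {0<..}) \<subseteq> convex hull {vert M 2, vert M 1, vert M 0}"
    using in_convex_hull_vert[OF M0 _ M_f] by (force simp: mem_Times_iff)
qed

lemma DeltaK_imp_rat_indep_homog:
  assumes "(\<alpha>, \<beta>) \<in> DeltaK \<theta>" shows "rat_indep (homog (\<alpha>, \<beta>))"
  unfolding rat_indep_def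
proof (intro ballI impI)
  fix w assume "w \<in> \<rat> \<times> \<rat> \<times> \<rat>" and "inner w (homog (\<alpha>, \<beta>)) = 0"
  moreover obtain a b c where "w = (of_rat a, of_rat b, of_rat c)"
    using \<open>w \<in> _\<close> by (cases w) (auto elim!: Rats_cases)
  ultimately have "of_rat a + of_rat b * \<alpha> + of_rat c * \<beta> = 0" and "w = (of_rat a, of_rat b, of_rat c)"
    by (simp_all add: homog_def)
  with assms show "w = 0" by (auto simp: DeltaK_def zero_prod_def)
qed

theorem theorem2p5:
  fixes \<theta> :: real and p q n :: nat and \<alpha> \<beta> :: real
  assumes "cubic_gen \<theta>"
    and "p > 0" and "q > 0" and "coprime p q" and "\<not> 3 dvd p"
    and "(\<alpha>, \<beta>) \<in> DeltaK \<theta>"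
  shows "(\<alpha>, \<beta>) \<in> delta_n \<theta> (real p / real q) n (\<alpha>, \<beta>)"
proof -
  define M where "M = Mn \<theta> (real p / real q) n (\<alpha>, \<beta>)"
  have "(\<alpha>, \<beta>) \<in> Delta" using assms(6) by (simp add: DeltaK_def Delta_def)
  moreover have "rat_indep (homog (\<alpha>, \<beta>))" using assms(6) by (rule DeltaK_imp_rat_indep_homog)
  ultimately obtain w where "w \<in> {0<..} \<times> {0<..} \<times> {0<..}" and "mvec M w = homog (\<alpha>, \<beta>)"
    unfolding M_def using homog_in_image_Mn by blast
  then have "(\<alpha>, \<beta>) \<in> interior (convex hull {vert M 2, vert M 1, vert M 0})"
    by (intro in_interior_convex_hull_vert) (simp_all add: M_def det3_Mn Mn_first_row_pos)
  then show ?thesis by (simp add: delta_n_def M_def Let_def)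
qed

end
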